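(* Let $f:\mathbb{R}^n\to\mathbb{R}$ be continuously differentiable and bounded below, with $\nabla f$ Lipschitz continuous on $\mathbb{R}^n$, and let $s$ be an integer with $0<s<n$. Then any optimal solution $\mathbf{x}^*$ of the problem (P): minimize $f(\mathbf{x})$ subject to $\|\mathbf{x}\|_0\le s$, is an $L_2(f)$-stationary point of (P), i.e. $\nabla_i f(\mathbf{x}^* )=0$ for $i\in I_1(\mathbf{x}^* )$ and $|\nabla_i f(\mathbf{x}^* )|\le L_2(f)M_s(\mathbf{x}^* )$ for $i\in I_0(\mathbf{x}^* )$.
   Context: $\|\mathbf{x}\|_0$ is the number of nonzero components; $I_1(\mathbf{x})=\{i:x_i\neq0\}$, $I_0(\mathbf{x})=\{i:x_i=0\}$; $M_s(\mathbf{x})$ is the $s$-th largest absolute value among the components of $\mathbf{x}$. For $i\neq j$, $\nabla_{i,j}f(\mathbf{x})\in\mathbb{R}^2$ is the vector of the $i$-th and $j$-th partial derivatives, and $L_{i,j}(f)$ is a constant with $\|\nabla_{i,j}f(\mathbf{x})-\nabla_{i,j}f(\mathbf{x}+\mathbf{d})\|\le L_{i,j}(f)\|\mathbf{d}\|$ for all $\mathbf{x}$ and all $\mathbf{d}$ with at most two nonzero components; $L_2(f)=\max_{i\neq j}L_{i,j}(f)$. *)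

theory Defs
  imports "HOL-Analysis.Analysis" "HOL-Library.Multiset"
begin

text \<open>Vectors in R^n are modelled as real^'n for a finite index type 'n (n = CARD('n)).\<close>

definition l0norm :: "real^'n \<Rightarrow> nat" where
  "l0norm x = card {i. x $ i \<noteq> 0}"

definition I1 :: "real^'n \<Rightarrow> 'n set" where
  "I1 x = {i. x $ i \<noteq> 0}"

definition I0 :: "real^'n \<Rightarrow> 'n set" where
  "I0 x = {i. x $ i = 0}"

text \<open>M s x: the s-th largest absolute value among the components of x (s \<ge> 1),
  counted with multiplicity.\<close>
definition Ms :: "nat \<Rightarrow> real^'n \<Rightarrow> real" where
  "Ms s x = rev (sorted_list_of_multiset (image_mset (\<lambda>i. \<bar>x $ i\<bar>) (mset_set (UNIV :: 'n set)))) ! (s - 1)"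

definition pair_grad_dist :: "(real^'n \<Rightarrow> real^'n) \<Rightarrow> 'n \<Rightarrow> 'n \<Rightarrow> real^'n \<Rightarrow> real^'n \<Rightarrow> real" where
  "pair_grad_dist G i j x y = sqrt ((G x $ i - G y $ i)^2 + (G x $ j - G y $ j)^2)"

definition pair_lip_consts :: "(real^'n \<Rightarrow> real^'n) \<Rightarrow> ('n \<Rightarrow> 'n \<Rightarrow> real) \<Rightarrow> bool" where
  "pair_lip_consts G L \<longleftrightarrow> (\<forall>i j. i \<noteq> j \<longrightarrow> (\<forall>x d. l0norm d \<le> 2 \<longrightarrow>
      pair_grad_dist G i j x (x + d) \<le> L i j * norm d))"

definition L2 :: "('n \<Rightarrow> 'n \<Rightarrow> real) \<Rightarrow> real" where
  "L2 L = Max {L i j | i j. i \<noteq> j}"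

end

theory Submission
  imports Defs
begin

text \<open>Let x be optimal and g = \<nabla>f(x). Moving x along a single coordinate of its support keeps
  it feasible, so the corresponding partial derivative vanishes; the same holds off the support when
  l0norm x < s. If l0norm x = s and x_i = 0, pick j in the support with |x_j| = M_s(x) and
  replace the move x_j \<mapsto> 0 by x_i \<mapsto> t. This two-coordinate step is feasible, and the
  descent lemma for the pairwise Lipschitz constant L_{i,j} bounds the change of f by
  t g_i + L_{i,j}/2 (t^2 + x_j^2). Nonnegativity of this quadratic in t for all t is
  exactly |g_i| \<le> L_{i,j} |x_j| \<le> L_2 M_s(x).\<close>

lemma sorted_desc_nth_pos:
  fixes l :: "'a::{linorder,zero} list"
  assumes sorted: "sorted_wrt (\<ge>) l" and s_pos: "0 < s"
    and many_pos: "s \<le> length (filter (\<lambda>v. v > 0) l)"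
  shows "l ! (s - 1) > 0"
proof (rule ccontr)
  assume "\<not> l ! (s - 1) > 0"
  then have tail: "\<not> l ! m > 0" if "s - 1 \<le> m" "m < length l" for m
    using sorted_wrt_nth_less[OF sorted, of "s - 1" m] that
    by (cases "m = s - 1") (auto simp: not_less)
  have "{m. m < length l \<and> l ! m > 0} \<subseteq> {..<s - 1}"
    using tail by (auto simp: not_le[symmetric])
  then have "length (filter (\<lambda>v. v > 0) l) \<le> s - 1"
    unfolding length_filter_conv_card by (metis card_lessThan card_mono finite_lessThan)
  with many_pos s_pos show False by simp
qed

lemma Ms_attained:
  fixes x :: "real^'n"
  assumes "0 < s" "s \<le> CARD('n)"
  obtains j where "\<bar>x $ j\<bar> = Ms s x" and "l0norm x = s \<Longrightarrow> x $ j \<noteq> 0"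
proof -
  define M where "M = image_mset (\<lambda>i. \<bar>x $ i\<bar>) (mset_set (UNIV :: 'n set))"
  define l where "l = rev (sorted_list_of_multiset M)"
  have Ms_nth: "Ms s x = l ! (s - 1)" by (simp add: Ms_def l_def M_def)
  have mset_l: "mset l = M" by (simp add: l_def)
  then have "length l = CARD('n)"
    by (metis M_def size_image_mset size_mset size_mset_set)
  with assms have "l ! (s - 1) \<in> set l" by simp
  moreover have "set l = range (\<lambda>i. \<bar>x $ i\<bar>)"
    by (metis M_def finite_class.finite_UNIV finite_set_mset_mset_set mset_l set_image_mset
        set_mset_mset)
  ultimately obtain j where j: "l ! (s - 1) = \<bar>x $ j\<bar>" by auto
  have "x $ j \<noteq> 0" if "l0norm x = s"
  proof -
    have "length (filter (\<lambda>v. v > 0) l) = size (filter_mset (\<lambda>v. v > 0) M)"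
      by (metis mset_l mset_filter size_mset)
    also have "\<dots> = l0norm x"
      by (simp add: M_def filter_mset_image_mset l0norm_def)
    finally have "s \<le> length (filter (\<lambda>v. v > 0) l)" using that by simp
    moreover have "sorted_wrt (\<ge>) l"
      using sorted_sorted_list_of_multiset[of M] by (simp add: l_def sorted_wrt_rev)
    ultimately show ?thesis
      using sorted_desc_nth_pos[of l s] \<open>0 < s\<close> j by auto
  qed
  with j Ms_nth show thesis by (intro that) auto
qed

lemma Ms_nonneg:
  fixes x :: "real^'n"
  assumes "0 < s" "s \<le> CARD('n)"
  shows "0 \<le> Ms s x"
proof -
  obtain j where "\<bar>x $ j\<bar> = Ms s x" using Ms_attained[OF assms] by blast
  then show ?thesis by (metis abs_ge_zero)
qed

lemma l0norm_le_card:
  fixes y :: "real^'n"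
  assumes "{k. y $ k \<noteq> 0} \<subseteq> A"
  shows "l0norm y \<le> card A"
  unfolding l0norm_def using assms by (intro card_mono) auto

lemma l0norm_axis_add_axis_le_2:
  "l0norm (c *\<^sub>R (axis i a + axis j b) :: real^'n) \<le> 2"
proof -
  have "l0norm (c *\<^sub>R (axis i a + axis j b) :: real^'n) \<le> card {i, j}"
    by (rule l0norm_le_card) (auto simp: axis_def)
  also have "\<dots> \<le> 2" by (simp add: card_insert_le_m1)
  finally show ?thesis .
qed

lemma norm_axis_add_axis:
  assumes "i \<noteq> j"
  shows "norm (axis i a + axis j b :: real^'n) = sqrt (a\<^sup>2 + b\<^sup>2)"
proof -
  have "(axis i a + axis j b) \<bullet> (axis i a + axis j b :: real^'n) = a\<^sup>2 + b\<^sup>2"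
    using assms by (simp add: inner_add_left inner_add_right inner_axis_axis power2_eq_square)
  then show ?thesis by (simp add: norm_eq_sqrt_inner)
qed

lemma pair_lip_consts_nonneg:
  fixes G :: "real^'n \<Rightarrow> real^'n"
  assumes "pair_lip_consts G L" "i \<noteq> j"
  shows "0 \<le> L i j"
proof -
  have "axis i 1 = 1 *\<^sub>R (axis i 1 + axis j 0 :: real^'n)"
    by (simp add: axis_def vec_eq_iff)
  then have "l0norm (axis i 1 :: real^'n) \<le> 2"
    by (metis l0norm_axis_add_axis_le_2)
  then have "pair_grad_dist G i j 0 (0 + axis i 1) \<le> L i j * norm (axis i 1 :: real^'n)"
    using assms unfolding pair_lip_consts_def by blast
  moreover have "0 \<le> pair_grad_dist G i j 0 (0 + axis i 1)"
    by (simp add: pair_grad_dist_def)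
  ultimately show ?thesis by simp
qed

lemma le_L2:
  fixes L :: "'n::finite \<Rightarrow> 'n \<Rightarrow> real"
  assumes "i \<noteq> j"
  shows "L i j \<le> L2 L"
proof -
  have "finite {L i j | i j. i \<noteq> j}"
    by (rule finite_subset[of _ "(\<lambda>(i, j). L i j) ` UNIV"]) auto
  then show ?thesis unfolding L2_def by (rule Max_ge) (use assms in auto)
qed

lemma L2_nonneg:
  assumes "pair_lip_consts G L" "2 \<le> CARD('n)"
  shows "0 \<le> L2 (L :: 'n::finite \<Rightarrow> 'n \<Rightarrow> real)"
proof -
  obtain i j :: 'n where "i \<noteq> j"
    using assms(2) card_le_Suc0_iff_eq[of "UNIV :: 'n set"] by auto
  then show ?thesis
    using pair_lip_consts_nonneg[OF assms(1)] le_L2 by (meson order_trans)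
qed

lemma has_real_derivative_along_line:
  assumes grad: "\<And>x. (f has_derivative (\<lambda>h. G x \<bullet> h)) (at x)"
  shows "((\<lambda>\<tau>. f (x + \<tau> *\<^sub>R d)) has_real_derivative (G (x + \<tau> *\<^sub>R d) \<bullet> d)) (at \<tau>)"
proof -
  have "((\<lambda>\<tau>. x + \<tau> *\<^sub>R d) has_derivative (\<lambda>h. h *\<^sub>R d)) (at \<tau>)"
    by (auto intro!: derivative_eq_intros)
  from has_derivative_compose[OF this grad]
  have "((\<lambda>\<tau>. f (x + \<tau> *\<^sub>R d)) has_derivative (\<lambda>h. G (x + \<tau> *\<^sub>R d) \<bullet> (h *\<^sub>R d))) (at \<tau>)"
    by simp
  moreover have "(\<lambda>h. G (x + \<tau> *\<^sub>R d) \<bullet> (h *\<^sub>R d)) = (*) (G (x + \<tau> *\<^sub>R d) \<bullet> d)"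
    by (simp add: inner_scaleR_right fun_eq_iff)
  ultimately show ?thesis unfolding has_field_derivative_def by simp
qed

lemma partial_zero_if_coordinate_min:
  fixes f :: "real^'n \<Rightarrow> real"
  assumes grad: "\<And>x. (f has_derivative (\<lambda>h. G x \<bullet> h)) (at x)"
    and min: "\<And>t. f x \<le> f (x + t *\<^sub>R axis i 1)"
  shows "G x $ i = 0"
proof -
  have "((\<lambda>\<tau>. f (x + \<tau> *\<^sub>R axis i 1)) has_real_derivative (G x \<bullet> axis i 1)) (at 0)"
    using has_real_derivative_along_line[OF grad, of x "axis i 1" 0] by simp
  then have "G x \<bullet> axis i 1 = 0"
    by (rule DERIV_local_min[OF _ zero_less_one]) (use min in simp)
  then show ?thesis by (simp add: inner_axis)
qed

lemma two_term_Cauchy_Schwarz: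
  fixes p q a b :: real
  shows "p * a + q * b \<le> sqrt (p\<^sup>2 + q\<^sup>2) * sqrt (a\<^sup>2 + b\<^sup>2)"
proof -
  have "(p * a + q * b)\<^sup>2 \<le> (p\<^sup>2 + q\<^sup>2) * (a\<^sup>2 + b\<^sup>2)"
    using sum_squares_ge_zero[of "p * b - q * a" 0] by (simp add: power2_eq_square algebra_simps)
  then show ?thesis
    by (metis real_le_rsqrt real_sqrt_abs real_sqrt_le_mono real_sqrt_mult abs_ge_self order_trans)
qed

lemma pair_descent_lemma:
  fixes f :: "real^'n \<Rightarrow> real" and a b :: real
  assumes grad: "\<And>x. (f has_derivative (\<lambda>h. G x \<bullet> h)) (at x)"
    and Lc: "pair_lip_consts G L" and ij: "i \<noteq> j"
  defines "d \<equiv> axis i a + axis j b"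
  shows "f (x + d) \<le> f x + G x \<bullet> d + L i j / 2 * (a\<^sup>2 + b\<^sup>2)"
proof -
  define c where "c = a\<^sup>2 + b\<^sup>2"
  define h where "h \<tau> = f (x + \<tau> *\<^sub>R d) - \<tau> * (G x \<bullet> d) - L i j / 2 * \<tau>\<^sup>2 * c" for \<tau>
  \<comment> \<open>h' \<le> 0 on [0, 1]: the gradient increment along d is controlled by L i j\<close>
  have "h 1 \<le> h 0"
  proof (rule DERIV_nonpos_imp_nonincreasing[of 0 1 h])
    fix \<tau> :: real assume \<tau>: "0 \<le> \<tau>" "\<tau> \<le> 1"
    let ?y = "x + \<tau> *\<^sub>R d"
    have Dh: "(h has_real_derivative (G ?y \<bullet> d - G x \<bullet> d - L i j * \<tau> * c)) (at \<tau>)"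
      unfolding h_def
      by (rule derivative_eq_intros has_real_derivative_along_line[OF grad] | simp)+
    have "G ?y \<bullet> d - G x \<bullet> d = (G ?y $ i - G x $ i) * a + (G ?y $ j - G x $ j) * b"
      by (simp add: d_def inner_add_right inner_axis algebra_simps)
    also have "\<dots> \<le> pair_grad_dist G i j x ?y * sqrt c"
      unfolding pair_grad_dist_def c_def
      using two_term_Cauchy_Schwarz[of "G ?y $ i - G x $ i" a "G ?y $ j - G x $ j" b]
      by (simp add: power2_commute)
    also have "\<dots> \<le> L i j * norm (\<tau> *\<^sub>R d) * sqrt c"
    proof (rule mult_right_mono)
      show "pair_grad_dist G i j x ?y \<le> L i j * norm (\<tau> *\<^sub>R d)"
        using Lc ij l0norm_axis_add_axis_le_2[of \<tau> i a j b]
        unfolding pair_lip_consts_def d_def by blast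
    qed (simp add: c_def)
    also have "\<dots> = L i j * \<tau> * c"
      using \<tau> norm_axis_add_axis[OF ij] by (simp add: d_def c_def)
    finally show "\<exists>y. (h has_real_derivative y) (at \<tau>) \<and> y \<le> 0"
      using Dh by auto
  qed simp
  then show ?thesis by (simp add: h_def c_def)
qed

lemma abs_le_if_quadratic_nonneg:
  fixes g L c :: real
  assumes nonneg: "\<And>t. 0 \<le> t * g + L / 2 * (t\<^sup>2 + c\<^sup>2)" and "0 \<le> L"
  shows "\<bar>g\<bar> \<le> L * \<bar>c\<bar>"
proof (cases "L = 0")
  case True
  with nonneg[of "- g"] show ?thesis by (auto simp: mult_le_0_iff)
next
  case False
  with \<open>0 \<le> L\<close> have "0 < L" by simp
  \<comment> \<open>evaluate at the minimiser t = -g/L\<close>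
  have "0 \<le> (- g / L) * g + L / 2 * ((- g / L)\<^sup>2 + c\<^sup>2)" by (rule nonneg)
  also have "\<dots> = ((L * \<bar>c\<bar>)\<^sup>2 - g\<^sup>2) / (2 * L)"
    using \<open>0 < L\<close> by (simp add: power2_eq_square field_simps)
  finally have "g\<^sup>2 \<le> (L * \<bar>c\<bar>)\<^sup>2"
    using \<open>0 < L\<close> by (simp add: zero_le_divide_iff)
  then show ?thesis
    using \<open>0 \<le> L\<close> by (metis abs_ge_zero abs_le_square_iff mult_nonneg_nonneg abs_of_nonneg)
qed

lemma sparse_min_partial_zero:
  fixes f :: "real^'n \<Rightarrow> real"
  assumes grad: "\<And>x. (f has_derivative (\<lambda>h. G x \<bullet> h)) (at x)"
    and opt: "\<And>y. l0norm y \<le> s \<Longrightarrow> f x \<le> f y"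
    and room: "l0norm x < s \<or> x $ i \<noteq> 0" and feas: "l0norm x \<le> s"
  shows "G x $ i = 0"
proof (rule partial_zero_if_coordinate_min[OF grad])
  fix t
  have "l0norm (x + t *\<^sub>R axis i 1) \<le> card (insert i {k. x $ k \<noteq> 0})"
    by (rule l0norm_le_card) (auto simp: axis_def)
  also have "\<dots> \<le> s"
    using room feas by (auto simp: card_insert_if l0norm_def)
  finally show "f x \<le> f (x + t *\<^sub>R axis i 1)" by (rule opt)
qed

lemma sparse_min_partial_bound:
  fixes f :: "real^'n \<Rightarrow> real"
  assumes grad: "\<And>x. (f has_derivative (\<lambda>h. G x \<bullet> h)) (at x)"
    and Lc: "pair_lip_consts G L"
    and opt: "\<And>y. l0norm y \<le> s \<Longrightarrow> f x \<le> f y"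
    and full: "l0norm x = s" and "0 < s" and xi: "x $ i = 0"
  shows "\<bar>G x $ i\<bar> \<le> L2 L * Ms s x"
proof -
  have "s \<le> CARD('n)"
    using full card_mono[of UNIV "{k. x $ k \<noteq> 0}"] by (simp add: l0norm_def)
  then obtain j where xj: "x $ j \<noteq> 0" "\<bar>x $ j\<bar> = Ms s x"
    using Ms_attained[OF \<open>0 < s\<close>, where x = x] full by blast
  with xi have ij: "i \<noteq> j" by auto
  have "G x $ j = 0"
    by (rule sparse_min_partial_zero[OF grad opt]) (use xj full in auto)
  have "0 \<le> t * G x $ i + L i j / 2 * (t\<^sup>2 + (x $ j)\<^sup>2)" for t
  proof -
    let ?d = "axis i t + axis j (- x $ j) :: real^'n"
    have "l0norm (x + ?d) \<le> card (insert i ({k. x $ k \<noteq> 0} - {j}))"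
      by (rule l0norm_le_card) (auto simp: axis_def)
    also have "\<dots> \<le> s"
      using xj full \<open>0 < s\<close> by (simp add: card_insert_if l0norm_def)
    finally have "f x \<le> f (x + ?d)" by (rule opt)
    also have "\<dots> \<le> f x + G x \<bullet> ?d + L i j / 2 * (t\<^sup>2 + (- x $ j)\<^sup>2)"
      by (rule pair_descent_lemma[OF grad Lc ij])
    also have "G x \<bullet> ?d = t * G x $ i"
      using \<open>G x $ j = 0\<close> by (simp add: inner_add_right inner_axis)
    finally show ?thesis by simp
  qed
  then have "\<bar>G x $ i\<bar> \<le> L i j * \<bar>x $ j\<bar>"
    by (rule abs_le_if_quadratic_nonneg[OF _ pair_lip_consts_nonneg[OF Lc ij]])
  also have "\<dots> \<le> L2 L * \<bar>x $ j\<bar>"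
    by (rule mult_right_mono[OF le_L2[OF ij]]) simp
  finally show ?thesis using xj by simp
qed

theorem corollary2p2:
  fixes f :: "real^'n \<Rightarrow> real" and G :: "real^'n \<Rightarrow> real^'n"
    and s :: nat and L :: "'n \<Rightarrow> 'n \<Rightarrow> real" and xstar :: "real^'n"
  assumes grad: "\<And>x. (f has_derivative (\<lambda>h. G x \<bullet> h)) (at x)"
    and cont: "continuous_on UNIV G"
    and bdd: "\<exists>c. \<forall>x. c \<le> f x"
    and lip: "\<exists>K. \<forall>x y. norm (G x - G y) \<le> K * norm (x - y)"
    and s_pos: "0 < s" and s_lt: "s < CARD('n)"
    and Lc: "pair_lip_consts G L"
    and feas: "l0norm xstar \<le> s"
    and opt: "\<And>x. l0norm x \<le> s \<Longrightarrow> f xstar \<le> f x"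
  shows "(\<forall>i\<in>I1 xstar. G xstar $ i = 0) \<and>
         (\<forall>i\<in>I0 xstar. \<bar>G xstar $ i\<bar> \<le> L2 L * Ms s xstar)"
proof -
  have "\<bar>G xstar $ i\<bar> \<le> L2 L * Ms s xstar" if "xstar $ i = 0" for i
  proof (cases "l0norm xstar < s")
    case True
    then have "G xstar $ i = 0" by (intro sparse_min_partial_zero[OF grad opt]) (use feas in auto)
    moreover have "0 \<le> L2 L" using L2_nonneg[OF Lc] s_pos s_lt by simp
    moreover have "0 \<le> Ms s xstar" by (rule Ms_nonneg) (use s_pos s_lt in auto)
    ultimately show ?thesis by simp
  next
    case False
    with feas have "l0norm xstar = s" by simp
    then show ?thesis using sparse_min_partial_bound[OF grad Lc opt _ s_pos that] by simp
  qed
  moreover have "G xstar $ i = 0" if "xstar $ i \<noteq> 0" for i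
    by (rule sparse_min_partial_zero[OF grad opt _ feas]) (use that in auto)
  ultimately show ?thesis by (auto simp: I1_def I0_def)
qed

end
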